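(* Let $X\neq\{0\}$ be a real normed space and let $\mathcal{G}\subset C(\mathbb{R})$ be fundamental in $C(\mathbb{R})$. Let $\mathcal{F}\subset X^*$ be such that $\{f/\|f\|: f\in\mathcal{F},\ f\neq0\}$ is dense in the unit sphere $\{f\in X^*:\|f\|=1\}$ with respect to the operator norm. Then $\mathcal{G}\circ\mathcal{F}=\{g\circ f: g\in\mathcal{G},\ f\in\mathcal{F}\}$ is fundamental in $C(X)$.
   Context: $X^*$ is the space of bounded linear functionals on $X$ with the operator norm $\|f\|=\sup_{\|x\|\le1}|f(x)|$. For a normed space $Y$, a subset $S\subset C(Y)$ (continuous real functions on $Y$) is called fundamental if its linear span is dense in $C(Y)$ in the sense of uniform convergence on compact sets: for every compact $K\subset Y$, every $h\in C(Y)$ and every $\varepsilon>0$ there is $s$ in the span of $S$ with $\sup_{x\in K}|h(x)-s(x)|<\varepsilon$. *)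

theory Defs
  imports "HOL-Analysis.Analysis"
begin

definition fun_span :: "('a \<Rightarrow> real) set \<Rightarrow> ('a \<Rightarrow> real) set" where
  "fun_span S = {s. \<exists>n (c::nat \<Rightarrow> real) g. (\<forall>i<n. g i \<in> S) \<and> s = (\<lambda>x. \<Sum>i<n. c i * g i x)}"

definition fundamental :: "('a::topological_space \<Rightarrow> real) set \<Rightarrow> bool" where
  "fundamental S \<longleftrightarrow> (\<forall>g\<in>S. continuous_on UNIV g) \<and>
     (\<forall>K h \<epsilon>. compact K \<and> continuous_on UNIV h \<and> \<epsilon> > 0 \<longrightarrow>
        (\<exists>s\<in>fun_span S. \<forall>x\<in>K. \<bar>h x - s x\<bar> < \<epsilon>))"

end

theory Submission
  imports Defs
begin

(* Exponentials exp \<circ> \<phi> of bounded linear functionals span an algebra of continuous functions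
   (exp \<phi> * exp \<phi>' = exp (\<phi> + \<phi>')) which, by Hahn-Banach, separates points; by
   Stone-Weierstrass this span is dense in C(X).
   It therefore suffices to approximate a single ridge function u \<circ> \<psi> with \<parallel>\<psi>\<parallel> = 1 uniformly
   on a compact K. Replace \<psi> by a nearby normalised f/\<parallel>f\<parallel> with f \<in> F: on the bounded set K the
   values of \<psi> and f/\<parallel>f\<parallel> differ uniformly little, so by uniform continuity of u on a bounded
   interval u \<circ> \<psi> is close to the ridge function s \<mapsto> u (s/\<parallel>f\<parallel>) along f, and the latter is
   approximated on the compact set f(K) by the span of G. *)

section \<open>Linear combinations and uniform approximation on compact sets\<close>

lemma fun_span_zero: "(\<lambda>x. 0) \<in> fun_span S"
  unfolding fun_span_def by (auto intro: exI[of _ 0])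

lemma fun_span_cons:
  assumes "g \<in> S" "s \<in> fun_span S"
  shows "(\<lambda>x. c * g x + s x) \<in> fun_span S"
proof -
  obtain n d h where h: "\<forall>i<(n::nat). h i \<in> S" and s: "s = (\<lambda>x. \<Sum>i<n. d i * h i x)"
    using assms(2) unfolding fun_span_def by blast
  have "\<forall>i<Suc n. (h(n := g)) i \<in> S"
    using h assms(1) by (auto simp: less_Suc_eq)
  moreover have "(\<lambda>x. c * g x + s x) = (\<lambda>x. \<Sum>i<Suc n. (d(n := c)) i * (h(n := g)) i x)"
    by (simp add: s add.commute)
  ultimately show ?thesis
    unfolding fun_span_def by blast
qed

lemma fun_span_induct [consumes 1, case_names zero cons]:
  assumes "s \<in> fun_span S" and "P (\<lambda>x. 0)"
    and "\<And>c g s. g \<in> S \<Longrightarrow> s \<in> fun_span S \<Longrightarrow> P s \<Longrightarrow> P (\<lambda>x. c * g x + s x)"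
  shows "P s"
proof -
  obtain n d h where h: "\<forall>i<(n::nat). h i \<in> S" and s: "s = (\<lambda>x. \<Sum>i<n. d i * h i x)"
    using assms(1) unfolding fun_span_def by blast
  have "(\<lambda>x. \<Sum>i<n. d i * h i x) \<in> fun_span S \<and> P (\<lambda>x. \<Sum>i<n. d i * h i x)"
    using h
  proof (induction n)
    case 0
    then show ?case using fun_span_zero assms(2) by simp
  next
    case (Suc n)
    then have "h n \<in> S" "(\<lambda>x. \<Sum>i<n. d i * h i x) \<in> fun_span S \<and> P (\<lambda>x. \<Sum>i<n. d i * h i x)"
      by simp_all
    moreover have "(\<lambda>x. \<Sum>i<Suc n. d i * h i x) = (\<lambda>x. d n * h n x + (\<Sum>i<n. d i * h i x))"
      by (simp add: add.commute)
    ultimately show ?case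
      using fun_span_cons assms(3) by auto
  qed
  then show ?thesis using s by simp
qed

lemma fun_span_superset: "g \<in> S \<Longrightarrow> g \<in> fun_span S"
  using fun_span_cons[OF _ fun_span_zero, of g S 1] by simp

lemma fun_span_mono: "S \<subseteq> T \<Longrightarrow> fun_span S \<subseteq> fun_span T"
  unfolding fun_span_def by blast

lemma fun_span_lincomb:
  assumes "s \<in> fun_span S" "t \<in> fun_span S"
  shows "(\<lambda>x. c * s x + t x) \<in> fun_span S"
  using assms
proof (induction arbitrary: c t rule: fun_span_induct)
  case zero
  then show ?case by simp
next
  case (cons d g r)
  then have "(\<lambda>x. (c * d) * g x + (c * r x + t x)) \<in> fun_span S"
    using fun_span_cons by blast
  then show ?case by (simp add: algebra_simps)
qed

lemma fun_span_mult:
  assumes mult_closed: "\<And>g h. g \<in> S \<Longrightarrow> h \<in> S \<Longrightarrow> (\<lambda>x. g x * h x) \<in> S"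
    and "s \<in> fun_span S" "t \<in> fun_span S"
  shows "(\<lambda>x. s x * t x) \<in> fun_span S"
  using assms(2)
proof (induction rule: fun_span_induct)
  case zero
  then show ?case using fun_span_zero by simp
next
  case (cons c g r)
  have "(\<lambda>x. g x * t x) \<in> fun_span S"
    using assms(3)
  proof (induction rule: fun_span_induct)
    case zero
    then show ?case using fun_span_zero by simp
  next
    case (cons d h q)
    then have "(\<lambda>x. d * (g x * h x) + g x * q x) \<in> fun_span S"
      using fun_span_cons mult_closed \<open>g \<in> S\<close> by blast
    then show ?case by (simp add: algebra_simps)
  qed
  then have "(\<lambda>x. c * (g x * t x) + r x * t x) \<in> fun_span S"
    using fun_span_lincomb cons.IH by blast
  then show ?case by (simp add: algebra_simps)
qed

lemma fun_span_comp:
  assumes "s \<in> fun_span S"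
  shows "s \<circ> f \<in> fun_span ((\<lambda>g. g \<circ> f) ` S)"
proof -
  obtain n c g where "\<forall>i<(n::nat). g i \<in> S" and "s = (\<lambda>x. \<Sum>i<n. c i * g i x)"
    using assms unfolding fun_span_def by blast
  then show ?thesis
    unfolding fun_span_def by (intro CollectI exI[of _ n] exI[of _ c] exI[of _ "\<lambda>i. g i \<circ> f"]) auto
qed

lemma fun_span_continuous_on:
  assumes "\<And>g. g \<in> S \<Longrightarrow> continuous_on A g" "s \<in> fun_span S"
  shows "continuous_on A s"
  using assms(2) by (induction rule: fun_span_induct) (use assms(1) in \<open>auto intro!: continuous_intros\<close>)

definition approximable_on :: "'a set \<Rightarrow> ('a \<Rightarrow> real) set \<Rightarrow> ('a \<Rightarrow> real) \<Rightarrow> bool" where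
  "approximable_on K T h \<longleftrightarrow> (\<forall>e>0. \<exists>t\<in>fun_span T. \<forall>x\<in>K. \<bar>h x - t x\<bar> < e)"

lemma fundamental_iff_approximable_on:
  "fundamental S \<longleftrightarrow> (\<forall>g\<in>S. continuous_on UNIV g) \<and>
     (\<forall>K h. compact K \<and> continuous_on UNIV h \<longrightarrow> approximable_on K S h)"
  unfolding fundamental_def approximable_on_def by blast

lemma approximable_on_mono:
  "approximable_on K S h \<Longrightarrow> S \<subseteq> T \<Longrightarrow> approximable_on K T h"
  unfolding approximable_on_def using fun_span_mono by blast

lemma approximable_on_if_close:
  assumes "\<And>e. e > 0 \<Longrightarrow> \<exists>r. approximable_on K T r \<and> (\<forall>x\<in>K. \<bar>h x - r x\<bar> < e)"
  shows "approximable_on K T h"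
  unfolding approximable_on_def
proof (intro allI impI)
  fix e :: real
  assume "e > 0"
  then obtain r where r: "approximable_on K T r" "\<forall>x\<in>K. \<bar>h x - r x\<bar> < e / 2"
    using assms half_gt_zero by blast
  then obtain t where t: "t \<in> fun_span T" "\<forall>x\<in>K. \<bar>r x - t x\<bar> < e / 2"
    using \<open>e > 0\<close> half_gt_zero unfolding approximable_on_def by blast
  have "\<bar>h x - t x\<bar> < e" if "x \<in> K" for x
  proof -
    have "\<bar>h x - r x\<bar> < e / 2" "\<bar>r x - t x\<bar> < e / 2"
      using r(2) t(2) that by auto
    then show ?thesis by arith
  qed
  with t(1) show "\<exists>t\<in>fun_span T. \<forall>x\<in>K. \<bar>h x - t x\<bar> < e"
    by blast
qed

lemma approximable_on_lincomb:
  assumes "approximable_on K T g" "approximable_on K T r"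
  shows "approximable_on K T (\<lambda>x. c * g x + r x)"
  unfolding approximable_on_def
proof (intro allI impI)
  fix e :: real
  assume "e > 0"
  define d where "d = e / (2 * (\<bar>c\<bar> + 1))"
  have "d > 0" "\<bar>c\<bar> * d \<le> e / 2"
    using \<open>e > 0\<close> by (auto simp: d_def field_simps)
  obtain t1 where t1: "t1 \<in> fun_span T" "\<forall>x\<in>K. \<bar>g x - t1 x\<bar> < d"
    using assms(1) \<open>d > 0\<close> unfolding approximable_on_def by blast
  obtain t2 where t2: "t2 \<in> fun_span T" "\<forall>x\<in>K. \<bar>r x - t2 x\<bar> < e / 2"
    using assms(2) \<open>e > 0\<close> unfolding approximable_on_def by (meson half_gt_zero)
  have "\<bar>(c * g x + r x) - (c * t1 x + t2 x)\<bar> < e" if "x \<in> K" for x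
  proof -
    have "\<bar>(c * g x + r x) - (c * t1 x + t2 x)\<bar> \<le> \<bar>c\<bar> * \<bar>g x - t1 x\<bar> + \<bar>r x - t2 x\<bar>"
      by (metis abs_mult abs_triangle_ineq add_diff_add right_diff_distrib)
    also have "\<bar>c\<bar> * \<bar>g x - t1 x\<bar> \<le> \<bar>c\<bar> * d"
      using t1(2) that by (intro mult_left_mono) auto
    moreover have "\<bar>r x - t2 x\<bar> < e / 2"
      using t2(2) that by blast
    ultimately show ?thesis
      using \<open>\<bar>c\<bar> * d \<le> e / 2\<close> by linarith
  qed
  then show "\<exists>t\<in>fun_span T. \<forall>x\<in>K. \<bar>c * g x + r x - t x\<bar> < e"
    using fun_span_lincomb[OF t1(1) t2(1)] by (intro bexI[of _ "\<lambda>x. c * t1 x + t2 x"]) auto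
qed

lemma approximable_on_fun_span:
  assumes "\<And>g. g \<in> S \<Longrightarrow> approximable_on K T g" "s \<in> fun_span S"
  shows "approximable_on K T s"
  using assms(2)
proof (induction rule: fun_span_induct)
  case zero
  then show ?case
    using fun_span_zero unfolding approximable_on_def by force
next
  case (cons c g r)
  then show ?case
    using assms(1) approximable_on_lincomb by blast
qed

lemma approximable_on_comp_fundamental:
  assumes "fundamental G" "continuous_on UNIV f" "compact K" "continuous_on UNIV u"
  shows "approximable_on K ((\<lambda>g. g \<circ> f) ` G) (u \<circ> f)"
  unfolding approximable_on_def
proof (intro allI impI)
  fix e :: real
  assume "e > 0"
  have "compact (f ` K)"
    using assms(2,3) continuous_on_subset compact_continuous_image by blast
  then obtain s where s: "s \<in> fun_span G" "\<forall>y\<in>f ` K. \<bar>u y - s y\<bar> < e"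
    using assms(1,4) \<open>e > 0\<close> unfolding fundamental_def by blast
  show "\<exists>t\<in>fun_span ((\<lambda>g. g \<circ> f) ` G). \<forall>x\<in>K. \<bar>(u \<circ> f) x - t x\<bar> < e"
    using fun_span_comp[OF s(1)] s(2) by (intro bexI[of _ "s \<circ> f"]) auto
qed

section \<open>Hahn--Banach for norm-dominated functionals\<close>

(* Graphs of norm-dominated linear functionals on subspaces; Zorn's lemma is applied to these
   sets, which avoids partial functions. *)
definition norm_dominated_graph :: "('a::real_normed_vector \<times> real) set \<Rightarrow> bool" where
  "norm_dominated_graph H \<longleftrightarrow> subspace H \<and> (\<forall>(x, a)\<in>H. a \<le> norm x)"

lemma norm_dominated_graph_unique:
  assumes H: "norm_dominated_graph H" and "(x, a) \<in> H" "(x, b) \<in> H"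
  shows "a = b"
proof -
  have sub: "subspace H" and dom: "\<And>y c. (y, c) \<in> H \<Longrightarrow> c \<le> norm y"
    using H unfolding norm_dominated_graph_def by auto
  have "(0, a - b) \<in> H"
    using subspace_diff[OF sub assms(2,3)] by simp
  moreover from this have "(0, b - a) \<in> H"
    using subspace_scale[OF sub, of "(0, a - b)" "-1"] by simp
  ultimately show ?thesis
    using dom[of 0 "a - b"] dom[of 0 "b - a"] by simp
qed

lemma subspace_Union_chain:
  assumes "C \<noteq> {}" "\<And>X. X \<in> C \<Longrightarrow> subspace X" "\<And>X Y. X \<in> C \<Longrightarrow> Y \<in> C \<Longrightarrow> X \<subseteq> Y \<or> Y \<subseteq> X"
  shows "subspace (\<Union>C)"
  unfolding subspace_def
proof (intro conjI ballI allI)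
  show "0 \<in> \<Union>C"
    using assms(1,2) subspace_0 by blast
next
  fix x y assume "x \<in> \<Union>C" "y \<in> \<Union>C"
  then obtain X where "X \<in> C" "x \<in> X" "y \<in> X"
    using assms(3) by blast
  then show "x + y \<in> \<Union>C"
    using assms(2) subspace_add by blast
next
  fix c x assume "x \<in> \<Union>C"
  then show "c *\<^sub>R x \<in> \<Union>C"
    using assms(2) subspace_scale by blast
qed

lemma norm_dominated_graph_extend_bound:
  assumes H: "norm_dominated_graph H"
    and c: "\<And>m a. (m, a) \<in> H \<Longrightarrow> a + c \<le> norm (m + x) \<and> a - c \<le> norm (m - x)"
    and "(m, a) \<in> H"
  shows "a + t * c \<le> norm (m + t *\<^sub>R x)"
proof -
  have sub: "subspace H" and dom: "\<And>y b. (y, b) \<in> H \<Longrightarrow> b \<le> norm y"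
    using H unfolding norm_dominated_graph_def by auto
  consider "t = 0" | "t \<noteq> 0" by blast
  then show ?thesis
  proof cases
    case 1
    then show ?thesis using dom assms(3) by simp
  next
    case 2
    (* rescaling by 1/|t| reduces the claim to t = 1 and t = -1, which is hypothesis c *)
    define s where "s = \<bar>t\<bar>"
    have "s > 0" using 2 by (simp add: s_def)
    have "(inverse s *\<^sub>R m, a / s) \<in> H"
      using subspace_scale[OF sub assms(3), of "inverse s"] by (simp add: divide_inverse_commute)
    then have "a / s + sgn t * c \<le> norm (inverse s *\<^sub>R m + sgn t *\<^sub>R x)"
      using c 2 by (cases "t > 0") (auto simp: sgn_if)
    then have "s * (a / s + sgn t * c) \<le> s * norm (inverse s *\<^sub>R m + sgn t *\<^sub>R x)"
      using \<open>s > 0\<close> by (simp add: mult_left_mono)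
    also have "\<dots> = norm (s *\<^sub>R (inverse s *\<^sub>R m + sgn t *\<^sub>R x))"
      using \<open>s > 0\<close> by simp
    also have "s *\<^sub>R (inverse s *\<^sub>R m + sgn t *\<^sub>R x) = m + t *\<^sub>R x"
      using \<open>s > 0\<close> by (simp add: s_def scaleR_add_right abs_mult_sgn)
    finally show ?thesis
      using \<open>s > 0\<close> by (simp add: s_def algebra_simps abs_mult_sgn)
  qed
qed

lemma norm_dominated_graph_extend:
  assumes H: "norm_dominated_graph H" and "x \<notin> fst ` H"
  obtains H' where "norm_dominated_graph H'" "H \<subset> H'"
proof -
  have sub: "subspace H" and dom: "\<And>y b. (y, b) \<in> H \<Longrightarrow> b \<le> norm y"
    using H unfolding norm_dominated_graph_def by auto
  have "(0, 0) \<in> H"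
    using subspace_0[OF sub] by (simp add: zero_prod_def)
  have sep: "a - norm (m - x) \<le> norm (n + x) - b" if "(m, a) \<in> H" "(n, b) \<in> H" for m a n b
  proof -
    have "a + b \<le> norm (m + n)"
      using dom subspace_add[OF sub that] by simp
    also have "\<dots> \<le> norm (m - x) + norm (n + x)"
      using norm_triangle_ineq[of "m - x" "n + x"] by simp
    finally show ?thesis by simp
  qed
  define L where "L = {a - norm (m - x) | m a. (m, a) \<in> H}"
  define c where "c = Sup L"
  have "bdd_above L"
    unfolding L_def bdd_above_def using sep[OF _ \<open>(0, 0) \<in> H\<close>] by fastforce
  then have "a - norm (m - x) \<le> c" if "(m, a) \<in> H" for m a
    unfolding c_def using that by (intro cSup_upper) (auto simp: L_def)
  moreover have "c \<le> norm (n + x) - b" if "(n, b) \<in> H" for n b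
    unfolding c_def using \<open>(0, 0) \<in> H\<close> that sep by (intro cSup_least) (auto simp: L_def)
  ultimately have c: "a + c \<le> norm (m + x) \<and> a - c \<le> norm (m - x)" if "(m, a) \<in> H" for m a
    using that by fastforce
  define H' where "H' = span (insert (x, c) H)"
  have "norm_dominated_graph H'"
    unfolding norm_dominated_graph_def
  proof (intro conjI ballI)
    show "subspace H'"
      unfolding H'_def by (rule subspace_span)
  next
    fix p assume "p \<in> H'"
    then obtain k where "p - k *\<^sub>R (x, c) \<in> H"
      using sub unfolding H'_def span_insert span_eq_iff[of H, THEN iffD2, OF sub] by blast
    then have "(fst p - k *\<^sub>R x, snd p - k * c) \<in> H"
      by (cases p) simp
    from norm_dominated_graph_extend_bound[OF H c this, of k]
    show "case p of (y, b) \<Rightarrow> b \<le> norm y"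
      by (cases p) simp
  qed
  moreover have "H \<subset> H'"
    using span_superset[of "insert (x, c) H"] \<open>x \<notin> fst ` H\<close> unfolding H'_def by force
  ultimately show ?thesis
    using that by blast
qed

lemma total_norm_dominated_graph_functional:
  assumes H: "norm_dominated_graph H" and total: "fst ` H = UNIV"
  shows "\<exists>\<phi>. bounded_linear \<phi> \<and> (\<forall>x. (x, \<phi> x) \<in> H) \<and> (\<forall>x. \<bar>\<phi> x\<bar> \<le> norm x)"
proof -
  have sub: "subspace H" and dom: "\<And>y b. (y, b) \<in> H \<Longrightarrow> b \<le> norm y"
    using H unfolding norm_dominated_graph_def by auto
  define \<phi> where "\<phi> x = (THE a. (x, a) \<in> H)" for x
  have graph: "(x, \<phi> x) \<in> H" for x
  proof -
    obtain a where "(x, a) \<in> H"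
      using total by (metis UNIV_I imageE prod.collapse)
    then have "(THE a. (x, a) \<in> H) = a"
      using norm_dominated_graph_unique[OF H] by blast
    with \<open>(x, a) \<in> H\<close> show ?thesis
      unfolding \<phi>_def by simp
  qed
  have eval: "(x, a) \<in> H \<Longrightarrow> \<phi> x = a" for x a
    using norm_dominated_graph_unique[OF H graph] by blast
  have add: "\<phi> (x + y) = \<phi> x + \<phi> y" for x y
  proof -
    have "(x + y, \<phi> x + \<phi> y) \<in> H"
      using subspace_add[OF sub graph[of x] graph[of y]] by simp
    then show ?thesis by (rule eval)
  qed
  have scale: "\<phi> (r *\<^sub>R x) = r * \<phi> x" for r x
  proof -
    have "(r *\<^sub>R x, r * \<phi> x) \<in> H"
      using subspace_scale[OF sub graph[of x], of r] by simp
    then show ?thesis by (rule eval)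
  qed
  have bound: "\<bar>\<phi> x\<bar> \<le> norm x" for x
    using dom[OF graph[of x]] dom[OF graph[of "-x"]] scale[of "-1" x] by simp
  have "bounded_linear \<phi>"
    by (rule bounded_linear_intro[of _ 1]) (simp_all add: add scale bound)
  then show ?thesis
    using graph bound by blast
qed

theorem Hahn_Banach_norm_dominated_graph:
  assumes H: "norm_dominated_graph H"
  shows "\<exists>\<phi>. bounded_linear \<phi> \<and> (\<forall>(x, a)\<in>H. \<phi> x = a) \<and> (\<forall>x. \<bar>\<phi> x\<bar> \<le> norm x)"
proof -
  define A where "A = {H'. norm_dominated_graph H' \<and> H \<subseteq> H'}"
  have "\<exists>M\<in>A. \<forall>X\<in>A. M \<subseteq> X \<longrightarrow> X = M"
  proof (rule subset_Zorn_nonempty)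
    have "H \<in> A"
      using H unfolding A_def by simp
    then show "A \<noteq> {}"
      by blast
  next
    fix C assume "C \<noteq> {}" and "subset.chain A C"
    then have CA: "C \<subseteq> A" and chain: "\<And>X Y. X \<in> C \<Longrightarrow> Y \<in> C \<Longrightarrow> X \<subseteq> Y \<or> Y \<subseteq> X"
      unfolding subset_chain_def by blast+
    have sub: "subspace X" and dom: "\<forall>(x, a)\<in>X. a \<le> norm x" and "H \<subseteq> X" if "X \<in> C" for X
      using CA that unfolding A_def norm_dominated_graph_def by auto
    have "subspace (\<Union>C)"
      using subspace_Union_chain[OF \<open>C \<noteq> {}\<close> sub chain] .
    moreover have "\<forall>(x, a)\<in>\<Union>C. a \<le> norm x"
      using dom by blast
    moreover have "H \<subseteq> \<Union>C"
      using \<open>\<And>X. X \<in> C \<Longrightarrow> H \<subseteq> X\<close> \<open>C \<noteq> {}\<close> by blast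
    ultimately show "\<Union>C \<in> A"
      unfolding A_def norm_dominated_graph_def by simp
  qed
  then obtain M where "M \<in> A" and max: "\<forall>X\<in>A. M \<subseteq> X \<longrightarrow> X = M"
    by blast
  then have M: "norm_dominated_graph M" "H \<subseteq> M"
    unfolding A_def by auto
  have "fst ` M = UNIV"
  proof (rule ccontr)
    assume "fst ` M \<noteq> UNIV"
    then obtain x where "x \<notin> fst ` M"
      by blast
    with M(1) obtain M' where "norm_dominated_graph M'" "M \<subset> M'"
      by (rule norm_dominated_graph_extend)
    moreover from this have "M' \<in> A"
      using M(2) unfolding A_def by auto
    ultimately show False
      using max by blast
  qed
  then obtain \<phi> where \<phi>: "bounded_linear \<phi>" "\<And>x. (x, \<phi> x) \<in> M" "\<forall>x. \<bar>\<phi> x\<bar> \<le> norm x"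
    using total_norm_dominated_graph_functional[OF M(1)] by blast
  have "\<phi> x = a" if "(x, a) \<in> H" for x a
    using norm_dominated_graph_unique[OF M(1) \<phi>(2)] M(2) that by blast
  with \<phi> show ?thesis
    by blast
qed

lemma norming_functional_exists:
  fixes z :: "'a::real_normed_vector"
  shows "\<exists>\<phi>. bounded_linear \<phi> \<and> \<phi> z = norm z \<and> (\<forall>x. \<bar>\<phi> x\<bar> \<le> norm x)"
proof -
  have "\<forall>(x, a)\<in>span {(z, norm z)}. a \<le> norm x"
    unfolding span_singleton by (auto simp: mult_right_mono)
  then have "norm_dominated_graph (span {(z, norm z)})"
    unfolding norm_dominated_graph_def using subspace_span by blast
  then obtain \<phi> where "bounded_linear \<phi>" "\<forall>(x, a)\<in>span {(z, norm z)}. \<phi> x = a"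
    "\<forall>x. \<bar>\<phi> x\<bar> \<le> norm x"
    using Hahn_Banach_norm_dominated_graph by blast
  moreover have "(z, norm z) \<in> span {(z, norm z)}"
    by (simp add: span_base)
  ultimately show ?thesis
    by auto
qed

lemma separating_functional_exists:
  fixes x y :: "'a::real_normed_vector"
  assumes "x \<noteq> y"
  shows "\<exists>\<phi>::'a \<Rightarrow> real. bounded_linear \<phi> \<and> \<phi> x \<noteq> \<phi> y"
proof -
  obtain \<phi> :: "'a \<Rightarrow> real" where "bounded_linear \<phi>" "\<phi> (x - y) = norm (x - y)"
    using norming_functional_exists by blast
  moreover have "\<phi> (x - y) = \<phi> x - \<phi> y"
    using \<open>bounded_linear \<phi>\<close> by (simp add: linear_diff bounded_linear.linear)
  ultimately have "\<phi> x \<noteq> \<phi> y"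
    using assms by (metis diff_self eq_iff_diff_eq_0 norm_eq_zero)
  with \<open>bounded_linear \<phi>\<close> show ?thesis
    by blast
qed

lemma onorm_one_functional_exists:
  fixes z :: "'a::real_normed_vector"
  assumes "z \<noteq> 0"
  shows "\<exists>\<phi>::'a \<Rightarrow> real. bounded_linear \<phi> \<and> onorm \<phi> = 1"
proof -
  obtain \<phi> :: "'a \<Rightarrow> real" where \<phi>: "bounded_linear \<phi>" "\<phi> z = norm z" "\<forall>x. \<bar>\<phi> x\<bar> \<le> norm x"
    using norming_functional_exists by blast
  have "onorm \<phi> \<le> 1"
    using \<phi>(3) by (intro onorm_bound) auto
  moreover have "norm z \<le> onorm \<phi> * norm z"
    using onorm[OF \<phi>(1), of z] \<phi>(2) by simp
  then have "1 \<le> onorm \<phi>"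
    using assms by simp
  ultimately show ?thesis
    using \<phi>(1) by auto
qed

lemma bounded_linear_scaled_onorm_one:
  fixes \<phi> :: "'a::real_normed_vector \<Rightarrow> real"
  assumes "bounded_linear \<phi>" and "\<exists>z::'a. z \<noteq> 0"
  obtains \<psi> M where "bounded_linear \<psi>" "onorm \<psi> = 1" "\<And>x. \<phi> x = M * \<psi> x"
proof (cases "onorm \<phi> = 0")
  case True
  obtain \<psi> :: "'a \<Rightarrow> real" where "bounded_linear \<psi>" "onorm \<psi> = 1"
    using onorm_one_functional_exists assms(2) by blast
  moreover have "\<phi> x = 0 * \<psi> x" for x
    using True onorm_eq_0[OF assms(1)] by simp
  ultimately show ?thesis
    using that by blast
next
  case False
  define M where "M = onorm \<phi>"
  have "M > 0"
    using False onorm_pos_le[OF assms(1)] unfolding M_def by simp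
  have "bounded_linear (\<lambda>x. inverse M *\<^sub>R \<phi> x)"
    by (rule bounded_linear_compose[OF bounded_linear_scaleR_right assms(1)])
  moreover have "onorm (\<lambda>x. inverse M *\<^sub>R \<phi> x) = 1"
    using onorm_scaleR[OF assms(1), of "inverse M"] \<open>M > 0\<close> unfolding M_def by simp
  moreover have "\<phi> x = M * (inverse M *\<^sub>R \<phi> x)" for x
    using \<open>M > 0\<close> by simp
  ultimately show ?thesis
    using that by blast
qed

section \<open>Approximation of ridge functions\<close>

lemma uniformly_close_comp_functional:
  fixes u :: "real \<Rightarrow> real" and \<psi> :: "'a::real_normed_vector \<Rightarrow> real"
  assumes u: "continuous_on UNIV u" and \<psi>: "bounded_linear \<psi>" and K: "compact K" and "e > 0"
  obtains \<delta> where "\<delta> > 0"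
    "\<And>\<eta> x. bounded_linear \<eta> \<Longrightarrow> onorm (\<lambda>x. \<psi> x - \<eta> x) < \<delta> \<Longrightarrow> x \<in> K \<Longrightarrow>
       \<bar>u (\<psi> x) - u (\<eta> x)\<bar> < e"
proof -
  obtain B where "B > 0" and B: "\<And>x. x \<in> K \<Longrightarrow> norm x \<le> B"
    using compact_imp_bounded[OF K] bounded_pos by blast
  define R where "R = onorm \<psi> * B + 1"
  have "continuous_on (cball 0 R) u"
    using u by (rule continuous_on_subset) simp
  then have "uniformly_continuous_on (cball 0 R) u"
    by (rule compact_uniformly_continuous) simp
  then obtain d where "d > 0"
    and d: "\<forall>s\<in>cball 0 R. \<forall>t\<in>cball 0 R. dist t s < d \<longrightarrow> dist (u t) (u s) < e"
    using \<open>e > 0\<close> unfolding uniformly_continuous_on_def by blast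
  define \<delta> where "\<delta> = min 1 d / B"
  have "\<delta> > 0"
    using \<open>d > 0\<close> \<open>B > 0\<close> by (simp add: \<delta>_def)
  moreover have "\<bar>u (\<psi> x) - u (\<eta> x)\<bar> < e"
    if \<eta>: "bounded_linear \<eta>" and close: "onorm (\<lambda>x. \<psi> x - \<eta> x) < \<delta>" and "x \<in> K" for \<eta> x
  proof -
    have diff: "bounded_linear (\<lambda>x. \<psi> x - \<eta> x)"
      using \<psi> \<eta> by (rule bounded_linear_sub)
    have "\<bar>\<psi> x - \<eta> x\<bar> \<le> onorm (\<lambda>x. \<psi> x - \<eta> x) * norm x"
      using onorm[OF diff, of x] by simp
    also have "\<dots> \<le> onorm (\<lambda>x. \<psi> x - \<eta> x) * B"
      using B[OF \<open>x \<in> K\<close>] onorm_pos_le[OF diff] by (rule mult_left_mono)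
    also have "\<dots> < \<delta> * B"
      using close \<open>B > 0\<close> by simp
    also have "\<dots> = min 1 d"
      using \<open>B > 0\<close> by (simp add: \<delta>_def)
    finally have near: "\<bar>\<psi> x - \<eta> x\<bar> < min 1 d" .
    have "\<bar>\<psi> x\<bar> \<le> onorm \<psi> * B"
      using onorm[OF \<psi>, of x] B[OF \<open>x \<in> K\<close>] onorm_pos_le[OF \<psi>]
      by (simp add: order_trans[OF _ mult_left_mono])
    with near have "\<psi> x \<in> cball 0 R" "\<eta> x \<in> cball 0 R"
      by (auto simp: R_def)
    with near show ?thesis
      using d by (simp add: dist_real_def abs_minus_commute)
  qed
  ultimately show ?thesis
    using that by blast
qed

definition normalized_dense_in_unit_sphere :: "('a::real_normed_vector \<Rightarrow> real) set \<Rightarrow> bool" where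
  "normalized_dense_in_unit_sphere F \<longleftrightarrow> (\<forall>\<phi>::'a \<Rightarrow> real. bounded_linear \<phi> \<and> onorm \<phi> = 1 \<longrightarrow>
     (\<forall>\<epsilon>>0. \<exists>f\<in>F. f \<noteq> (\<lambda>x. 0) \<and> onorm (\<lambda>x. \<phi> x - f x / onorm f) < \<epsilon>))"

lemma approximable_on_ridge_onorm_one:
  fixes G :: "(real \<Rightarrow> real) set" and F :: "('a::real_normed_vector \<Rightarrow> real) set"
    and \<psi> :: "'a \<Rightarrow> real" and u :: "real \<Rightarrow> real"
  assumes G: "fundamental G" and F_dual: "\<forall>f\<in>F. bounded_linear f"
    and F_dense: "normalized_dense_in_unit_sphere F"
    and \<psi>: "bounded_linear \<psi>" "onorm \<psi> = 1"
    and u: "continuous_on UNIV u" and K: "compact K"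
  shows "approximable_on K {g \<circ> f | g f. g \<in> G \<and> f \<in> F} (u \<circ> \<psi>)"
proof (rule approximable_on_if_close)
  fix e :: real
  assume "e > 0"
  obtain \<delta> where "\<delta> > 0" and \<delta>: "\<And>\<eta> x. bounded_linear \<eta> \<Longrightarrow> onorm (\<lambda>x. \<psi> x - \<eta> x) < \<delta> \<Longrightarrow>
      x \<in> K \<Longrightarrow> \<bar>u (\<psi> x) - u (\<eta> x)\<bar> < e"
    using uniformly_close_comp_functional[OF u \<psi>(1) K \<open>e > 0\<close>] by blast
  obtain f where "f \<in> F" "f \<noteq> (\<lambda>x. 0)" and close: "onorm (\<lambda>x. \<psi> x - f x / onorm f) < \<delta>"
    using F_dense \<psi> \<open>\<delta> > 0\<close> unfolding normalized_dense_in_unit_sphere_def by blast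
  have f: "bounded_linear f"
    using F_dual \<open>f \<in> F\<close> by blast
  define N where "N = onorm f"
  have "N \<noteq> 0"
    using \<open>f \<noteq> (\<lambda>x. 0)\<close> onorm_eq_0[OF f] unfolding N_def by auto
  have "bounded_linear (\<lambda>x. f x / N)"
    using f by (rule bounded_linear_divide[THEN bounded_linear_compose])
  then have "\<forall>x\<in>K. \<bar>(u \<circ> \<psi>) x - ((\<lambda>s. u (s / N)) \<circ> f) x\<bar> < e"
    using \<delta> close unfolding N_def by auto
  moreover have "approximable_on K ((\<lambda>g. g \<circ> f) ` G) ((\<lambda>s. u (s / N)) \<circ> f)"
    using G linear_continuous_on[OF f] K
    by (rule approximable_on_comp_fundamental) (intro continuous_on_compose2[OF u] continuous_intros; simp add: \<open>N \<noteq> 0\<close>)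
  then have "approximable_on K {g \<circ> f | g f. g \<in> G \<and> f \<in> F} ((\<lambda>s. u (s / N)) \<circ> f)"
    by (rule approximable_on_mono) (use \<open>f \<in> F\<close> in blast)
  ultimately show "\<exists>r. approximable_on K {g \<circ> f | g f. g \<in> G \<and> f \<in> F} r \<and> (\<forall>x\<in>K. \<bar>(u \<circ> \<psi>) x - r x\<bar> < e)"
    by blast
qed

lemma approximable_on_ridge:
  fixes G :: "(real \<Rightarrow> real) set" and F :: "('a::real_normed_vector \<Rightarrow> real) set"
    and \<phi> :: "'a \<Rightarrow> real" and u :: "real \<Rightarrow> real"
  assumes "\<exists>z::'a. z \<noteq> 0" and "fundamental G" "\<forall>f\<in>F. bounded_linear f"
    and "normalized_dense_in_unit_sphere F"
    and \<phi>: "bounded_linear \<phi>" and u: "continuous_on UNIV u" and "compact K"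
  shows "approximable_on K {g \<circ> f | g f. g \<in> G \<and> f \<in> F} (u \<circ> \<phi>)"
proof -
  obtain \<psi> M where \<psi>: "bounded_linear \<psi>" "onorm \<psi> = 1" and \<phi>_eq: "\<And>x. \<phi> x = M * \<psi> x"
    using bounded_linear_scaled_onorm_one[OF \<phi> \<open>\<exists>z::'a. z \<noteq> 0\<close>] by blast
  have "continuous_on UNIV (\<lambda>s. u (M * s))"
    by (intro continuous_on_compose2[OF u] continuous_intros) simp
  then have "approximable_on K {g \<circ> f | g f. g \<in> G \<and> f \<in> F} ((\<lambda>s. u (M * s)) \<circ> \<psi>)"
    using assms(2-4) \<psi> \<open>compact K\<close> by (intro approximable_on_ridge_onorm_one)
  then show ?thesis
    by (simp add: \<phi>_eq comp_def)
qed

lemma fun_span_exp_functionals_dense: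
  fixes K :: "'a::real_normed_vector set"
  assumes "compact K" "continuous_on K h" "e > 0"
  shows "\<exists>r\<in>fun_span {(\<lambda>x. exp (\<phi> x)) | \<phi>. bounded_linear \<phi>}. \<forall>x\<in>K. \<bar>h x - r x\<bar> < e"
proof -
  define E :: "('a \<Rightarrow> real) set" where "E = {(\<lambda>x. exp (\<phi> x)) | \<phi>. bounded_linear \<phi>}"
  have E_exp: "(\<lambda>x. exp (\<phi> x)) \<in> fun_span E" if "bounded_linear \<phi>" for \<phi>
  proof (rule fun_span_superset)
    show "(\<lambda>x. exp (\<phi> x)) \<in> E"
      using that unfolding E_def by blast
  qed
  have E_mult: "(\<lambda>x. g x * g' x) \<in> E" if g: "g \<in> E" and g': "g' \<in> E" for g g'
  proof -
    obtain \<phi> \<phi>' where "bounded_linear \<phi>" "g = (\<lambda>x. exp (\<phi> x))"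
      and "bounded_linear \<phi>'" "g' = (\<lambda>x. exp (\<phi>' x))"
      using g g' unfolding E_def by blast
    then have sum: "bounded_linear (\<lambda>x. \<phi> x + \<phi>' x)"
      and prod: "(\<lambda>x. g x * g' x) = (\<lambda>x. exp (\<phi> x + \<phi>' x))"
      by (simp_all add: bounded_linear_add exp_add)
    show ?thesis
      unfolding E_def by (rule CollectI, rule exI[of _ "\<lambda>x. \<phi> x + \<phi>' x"]) (simp add: sum prod)
  qed
  have E_cont: "continuous_on K g" if "g \<in> E" for g
  proof -
    obtain \<phi> where "bounded_linear \<phi>" "g = (\<lambda>x. exp (\<phi> x))"
      using \<open>g \<in> E\<close> unfolding E_def by blast
    then show ?thesis
      using continuous_on_exp[OF linear_continuous_on] by blast
  qed
  have "\<exists>r. r \<in> fun_span E \<and> (\<forall>x\<in>K. \<bar>h x - r x\<bar> < e)"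
  proof (rule Stone_Weierstrass_HOL[of K "\<lambda>r. r \<in> fun_span E"])
    show "(\<lambda>x. c) \<in> fun_span E" for c
      using fun_span_lincomb[OF E_exp[OF bounded_linear_zero] fun_span_zero, of c] by simp
    show "continuous_on K r" if "r \<in> fun_span E" for r
      using E_cont that by (rule fun_span_continuous_on)
    show "(\<lambda>x. r x + s x) \<in> fun_span E" if "r \<in> fun_span E \<and> s \<in> fun_span E" for r s
      using fun_span_lincomb[of r E s 1] that by simp
    show "(\<lambda>x. r x * s x) \<in> fun_span E" if "r \<in> fun_span E \<and> s \<in> fun_span E" for r s
      using that by (intro fun_span_mult[OF E_mult]) simp_all
    show "\<exists>r. r \<in> fun_span E \<and> r x \<noteq> r y" if xy: "x \<in> K \<and> y \<in> K \<and> x \<noteq> y" for x y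
    proof -
      obtain \<phi> :: "'a \<Rightarrow> real" where "bounded_linear \<phi>" "\<phi> x \<noteq> \<phi> y"
        using separating_functional_exists xy by blast
      then show ?thesis
        using E_exp by (intro exI[of _ "\<lambda>x. exp (\<phi> x)"]) simp
    qed
  qed (use assms in auto)
  then show ?thesis
    unfolding E_def[symmetric] Bex_def .
qed

lemma approximable_on_of_exp_functionals:
  fixes K :: "'a::real_normed_vector set"
  assumes "compact K" "continuous_on K h"
    and exp_approx: "\<And>\<phi>. bounded_linear \<phi> \<Longrightarrow> approximable_on K T (\<lambda>x. exp (\<phi> x))"
  shows "approximable_on K T h"
proof (rule approximable_on_if_close)
  fix e :: real
  assume "e > 0"
  then obtain r where r: "r \<in> fun_span {(\<lambda>x. exp (\<phi> x)) | \<phi>. bounded_linear \<phi>}"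
    and "\<forall>x\<in>K. \<bar>h x - r x\<bar> < e"
    using fun_span_exp_functionals_dense[OF assms(1,2)] by blast
  moreover have "approximable_on K T r"
    by (rule approximable_on_fun_span[OF _ r]) (auto intro: exp_approx)
  ultimately show "\<exists>r. approximable_on K T r \<and> (\<forall>x\<in>K. \<bar>h x - r x\<bar> < e)"
    by blast
qed

lemma continuous_on_comp_fundamental:
  assumes "fundamental G" "\<forall>f\<in>F. bounded_linear f" "t \<in> {g \<circ> f | g f. g \<in> G \<and> f \<in> F}"
  shows "continuous_on UNIV t"
proof -
  obtain g f where "t = g \<circ> f" "g \<in> G" "f \<in> F"
    using assms(3) by blast
  moreover from this have "continuous_on UNIV g" "bounded_linear f"
    using assms(1,2) unfolding fundamental_def by auto
  ultimately show ?thesis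
    by (metis continuous_on_compose continuous_on_subset linear_continuous_on subset_UNIV)
qed

theorem theorem4p3p3:
  fixes G :: "(real \<Rightarrow> real) set"
    and F :: "('a::real_normed_vector \<Rightarrow> real) set"
  assumes nontriv: "\<exists>x::'a. x \<noteq> 0"
    and G_fund: "fundamental G"
    and F_dual: "\<forall>f\<in>F. bounded_linear f"
    and F_dense: "\<forall>\<phi>::'a \<Rightarrow> real. bounded_linear \<phi> \<and> onorm \<phi> = 1 \<longrightarrow>
        (\<forall>\<epsilon>>0. \<exists>f\<in>F. f \<noteq> (\<lambda>x. 0) \<and> onorm (\<lambda>x. \<phi> x - f x / onorm f) < \<epsilon>)"
  shows "fundamental {g \<circ> f | g f. g \<in> G \<and> f \<in> F}"
proof -
  have dense: "normalized_dense_in_unit_sphere F"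
    using F_dense unfolding normalized_dense_in_unit_sphere_def .
  have "approximable_on K {g \<circ> f | g f. g \<in> G \<and> f \<in> F} h"
    if "compact K" "continuous_on UNIV h" for K h
  proof (rule approximable_on_of_exp_functionals[OF \<open>compact K\<close>])
    show "continuous_on K h"
      using \<open>continuous_on UNIV h\<close> by (rule continuous_on_subset) simp
    show "approximable_on K {g \<circ> f | g f. g \<in> G \<and> f \<in> F} (\<lambda>x. exp (\<phi> x))"
      if "bounded_linear \<phi>" for \<phi>
      using approximable_on_ridge[OF nontriv G_fund F_dual dense that continuous_on_exp[OF continuous_on_id] \<open>compact K\<close>]
      by (simp add: comp_def)
  qed
  moreover have "continuous_on UNIV t" if "t \<in> {g \<circ> f | g f. g \<in> G \<and> f \<in> F}" for t
    using G_fund F_dual that by (rule continuous_on_comp_fundamental)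
  ultimately show ?thesis
    unfolding fundamental_iff_approximable_on by blast
qed

end
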